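(* Let $n\ge 1$, let $a=(a_m)_{m\ge 0}$ and $b=(b_m)_{m\ge0}$ be complex sequences with $b_0=0$ and $b_m\neq 0$ for all $m\ge1$, and let $(p_m)_{m\ge0}$ be the monic polynomials defined by $p_{-1}=0$, $p_0=1$, $p_{m+1}(x)=(x-a_m)p_m(x)-b_mp_{m-1}(x)$ for $m\ge0$; write $p_m(x)=\sum_{l=0}^{m}p^m_l x^l$ with $p^m_m=1$. Then the assignment $$W:\ \tilde t^{(r)}_{ij}\longmapsto t^{(r)}_{ij}+\sum_{l=0}^{r-1}p^r_l\,t^{(l)}_{ij}\qquad(1\le i,j\le n,\ r\ge1)$$ extends to an algebra isomorphism $W: OY(\mathfrak{gl}_n,a,b)\to Y(\mathfrak{gl}_n)$. On generating series it is given, for $i,j=1,\dots,n$, by $$W(\tilde T_{ij}(u))=\frac{1}{2\pi i}\oint_{|z|=1}K\!\left(z,\tfrac1u\right)t_{ij}(z)\,\frac{dz}{z}=\sum_{l\ge0}u^{-l}\sum_{m=0}^{l}p^l_m\,t^{(m)}_{ij}.$$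
   Context: The Yangian $Y(\mathfrak{gl}_n)$ is the unital associative $\mathbb C$-algebra with generators $t^{(r)}_{ij}$ ($1\le i,j\le n$, $r\in\{1,2,\dots\}$) and defining relations $[t^{(r+1)}_{ij},t^{(s)}_{kl}]-[t^{(r)}_{ij},t^{(s+1)}_{kl}]=t^{(r)}_{kj}t^{(s)}_{il}-t^{(s)}_{kj}t^{(r)}_{il}$ for all $r,s\ge0$ and all $i,j,k,l$, where $t^{(0)}_{ij}=\delta_{ij}$; put $t_{ij}(z)=\sum_{r\ge0}t^{(r)}_{ij}z^{-r}$. For complex sequences $a,b$, $OY(\mathfrak{gl}_n,a,b)$ is the unital associative $\mathbb C$-algebra with generators $\tilde t^{(r)}_{ij}$ ($1\le i,j\le n$, $r\ge1$) and defining relations $$[\tilde t^{(r+1)}_{ij}+a_r\tilde t^{(r)}_{ij}+b_r\tilde t^{(r-1)}_{ij},\tilde t^{(s)}_{kl}]-[\tilde t^{(r)}_{ij},\tilde t^{(s+1)}_{kl}+a_s\tilde t^{(s)}_{kl}+b_s\tilde t^{(s-1)}_{kl}]=\tilde t^{(r)}_{kj}\tilde t^{(s)}_{il}-\tilde t^{(s)}_{kj}\tilde t^{(r)}_{il}$$ for all $r,s\ge0$ and all $i,j,k,l$, with conventions $\tilde t^{(0)}_{ij}=\delta_{ij}$, $\tilde t^{(-1)}_{ij}=0$; put $\tilde T_{ij}(u)=\delta_{ij}+\sum_{r\ge1}\tilde t^{(r)}_{ij}u^{-r}$. The generating function of the polynomials is $K(z,u)=\sum_{l\ge0}p_l(z)u^l$.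 The contour integral is understood formally: $\frac{1}{2\pi i}\oint_{|z|=1}F(z)\frac{dz}{z}$ denotes the coefficient of $z^0$ of the formal expression $F(z)$, taken coefficientwise in $u^{-1}$. *)

theory Defs
  imports "HOL-Library.Poly_Mapping" "HOL-Computational_Algebra.Polynomial"
begin

text \<open>Elements of the free associative algebra over the complex numbers on generators
of type 'g: finitely supported complex-valued functions on words (lists of generators).\<close>

type_synonym 'g fa = "'g list \<Rightarrow>\<^sub>0 complex"

definition fa_one :: "'g fa" where
  "fa_one = Poly_Mapping.single [] 1"

definition fa_gen :: "'g \<Rightarrow> 'g fa" where
  "fa_gen g = Poly_Mapping.single [g] 1"

definition fa_mult :: "'g fa \<Rightarrow> 'g fa \<Rightarrow> 'g fa" where
  "fa_mult f h = (\<Sum>v\<in>Poly_Mapping.keys f. \<Sum>w\<in>Poly_Mapping.keys h.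
       Poly_Mapping.single (v @ w) (Poly_Mapping.lookup f v * Poly_Mapping.lookup h w))"

definition fa_smult :: "complex \<Rightarrow> 'g fa \<Rightarrow> 'g fa" where
  "fa_smult c f = fa_mult (Poly_Mapping.single [] c) f"

definition fa_comm :: "'g fa \<Rightarrow> 'g fa \<Rightarrow> 'g fa" where
  "fa_comm x y = fa_mult x y - fa_mult y x"

definition fa_on :: "'g set \<Rightarrow> 'g fa \<Rightarrow> bool" where
  "fa_on G f \<longleftrightarrow> (\<forall>w\<in>Poly_Mapping.keys f. set w \<subseteq> G)"

inductive_set fa_ideal :: "'g set \<Rightarrow> 'g fa set \<Rightarrow> 'g fa set" for G R where
  base: "r \<in> R \<Longrightarrow> r \<in> fa_ideal G R"
| zero: "0 \<in> fa_ideal G R"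
| add: "x \<in> fa_ideal G R \<Longrightarrow> y \<in> fa_ideal G R \<Longrightarrow> x + y \<in> fa_ideal G R"
| lmul: "fa_on G c \<Longrightarrow> x \<in> fa_ideal G R \<Longrightarrow> fa_mult c x \<in> fa_ideal G R"
| rmul: "fa_on G c \<Longrightarrow> x \<in> fa_ideal G R \<Longrightarrow> fa_mult x c \<in> fa_ideal G R"

fun fa_word :: "('g \<Rightarrow> 'h fa) \<Rightarrow> 'g list \<Rightarrow> 'h fa" where
  "fa_word \<phi> [] = fa_one"
| "fa_word \<phi> (g # w) = fa_mult (\<phi> g) (fa_word \<phi> w)"

definition fa_subst :: "('g \<Rightarrow> 'h fa) \<Rightarrow> 'g fa \<Rightarrow> 'h fa" where
  "fa_subst \<phi> f = (\<Sum>w\<in>Poly_Mapping.keys f. fa_smult (Poly_Mapping.lookup f w) (fa_word \<phi> w))"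

text \<open>The algebra homomorphism Phi from the free algebra on G1 to the free algebra on G2
induces an isomorphism of the presented algebras (free on G1)/(R1) and (free on G2)/(R2):
it maps the ideal into the ideal (well defined), only the ideal into the ideal (injective),
and is onto modulo the ideal (surjective).\<close>
definition induces_iso ::
  "'g set \<Rightarrow> 'g fa set \<Rightarrow> 'h set \<Rightarrow> 'h fa set \<Rightarrow> ('g \<Rightarrow> 'h fa) \<Rightarrow> bool" where
  "induces_iso G1 R1 G2 R2 \<phi> \<longleftrightarrow>
     (\<forall>g\<in>G1. fa_on G2 (\<phi> g)) \<and>
     (\<forall>x. fa_on G1 x \<longrightarrow> (fa_subst \<phi> x \<in> fa_ideal G2 R2 \<longleftrightarrow> x \<in> fa_ideal G1 R1)) \<and>
     (\<forall>y. fa_on G2 y \<longrightarrow> (\<exists>x. fa_on G1 x \<and> fa_subst \<phi> x - y \<in> fa_ideal G2 R2))"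

text \<open>Generators (i,j,r) stand for t^(r)_ij with 1 <= i,j <= n, r >= 1.\<close>
definition gens :: "nat \<Rightarrow> (nat \<times> nat \<times> nat) set" where
  "gens n = {(i, j, r). 1 \<le> i \<and> i \<le> n \<and> 1 \<le> j \<and> j \<le> n \<and> 1 \<le> r}"

definition tY :: "nat \<Rightarrow> nat \<Rightarrow> nat \<Rightarrow> (nat \<times> nat \<times> nat) fa" where
  "tY r i j = (if r = 0 then (if i = j then fa_one else 0) else fa_gen (i, j, r))"

definition yangian_rels :: "nat \<Rightarrow> (nat \<times> nat \<times> nat) fa set" where
  "yangian_rels n = {fa_comm (tY (r+1) i j) (tY s k l) - fa_comm (tY r i j) (tY (s+1) k l)
        - (fa_mult (tY r k j) (tY s i l) - fa_mult (tY s k j) (tY r i l)) | r s i j k l.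
        i \<in> {1..n} \<and> j \<in> {1..n} \<and> k \<in> {1..n} \<and> l \<in> {1..n}}"

text \<open>Same generator set, read as tilde t^(r)_ij; tilde t^(0)_ij = delta_ij.\<close>
abbreviation tO :: "nat \<Rightarrow> nat \<Rightarrow> nat \<Rightarrow> (nat \<times> nat \<times> nat) fa" where
  "tO \<equiv> tY"

definition tO_prev :: "nat \<Rightarrow> nat \<Rightarrow> nat \<Rightarrow> (nat \<times> nat \<times> nat) fa" where
  "tO_prev r i j = (if r = 0 then 0 else tO (r - 1) i j)"

definition tO_shift :: "(nat \<Rightarrow> complex) \<Rightarrow> (nat \<Rightarrow> complex) \<Rightarrow> nat \<Rightarrow> nat \<Rightarrow> nat
    \<Rightarrow> (nat \<times> nat \<times> nat) fa" where
  "tO_shift a b r i j = tO (r+1) i j + fa_smult (a r) (tO r i j) + fa_smult (b r) (tO_prev r i j)"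

definition oy_rels :: "nat \<Rightarrow> (nat \<Rightarrow> complex) \<Rightarrow> (nat \<Rightarrow> complex) \<Rightarrow> (nat \<times> nat \<times> nat) fa set" where
  "oy_rels n a b = {fa_comm (tO_shift a b r i j) (tO s k l) - fa_comm (tO r i j) (tO_shift a b s k l)
        - (fa_mult (tO r k j) (tO s i l) - fa_mult (tO s k j) (tO r i l)) | r s i j k l.
        i \<in> {1..n} \<and> j \<in> {1..n} \<and> k \<in> {1..n} \<and> l \<in> {1..n}}"

text \<open>p_0 = 1, p_1 = x - a_0 (since p_{-1} = 0), p_{m+1} = (x - a_m) p_m - b_m p_{m-1}.\<close>
fun pseq :: "(nat \<Rightarrow> complex) \<Rightarrow> (nat \<Rightarrow> complex) \<Rightarrow> nat \<Rightarrow> complex poly" where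
  "pseq a b 0 = 1"
| "pseq a b (Suc 0) = [:- a 0, 1:]"
| "pseq a b (Suc (Suc m)) = [:- a (Suc m), 1:] * pseq a b (Suc m) - smult (b (Suc m)) (pseq a b m)"

definition Wmap :: "(nat \<Rightarrow> complex) \<Rightarrow> (nat \<Rightarrow> complex) \<Rightarrow> nat \<times> nat \<times> nat
    \<Rightarrow> (nat \<times> nat \<times> nat) fa" where
  "Wmap a b g = (case g of (i, j, r) \<Rightarrow>
      tY r i j + (\<Sum>l<r. fa_smult (coeff (pseq a b r) l) (tY l i j)))"

text \<open>Formal contour integral: the coefficient of z^0 in P(z) * t(z), where
 t(z) = sum_r T_r z^(-r); this is sum_k [z^k]P * T_k.\<close>
definition z0_coeff :: "complex poly \<Rightarrow> (nat \<Rightarrow> 'g fa) \<Rightarrow> 'g fa" where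
  "z0_coeff P T = (\<Sum>k\<le>degree P. fa_smult (coeff P k) (T k))"

end

theory Submission
  imports Defs
begin

text \<open>
  For a polynomial p = sum_k c_k x^k write t_ij[p] = sum_k c_k t^(k)_ij (poly_entry below), the
  formal contour integral of p(z) t_ij(z).  The defining relation of the Yangian is R(x^r, x^s) = 0
  for the expression (rtt_rel below)
  R(p, q) = [t_ij[x p], t_kl[q]] - [t_ij[p], t_kl[x q]] - (t_kj[p] t_il[q] - t_kj[q] t_il[p]),
  which is bilinear in (p, q), so it holds for all polynomials p, q.  By the three-term recurrence
  x p_r = p_(r+1) + a_r p_r + b_r p_(r-1), the defining relation of OY is R(p_r, p_s) = 0 once
  tilde t^(r)_ij is read as t_ij[p_r], which is exactly what W does.  Since p_r is monic of degree r,
  the p_r form a triangular basis of C[x]; solving the triangular system gives the inverse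
  substitution, and each family of relations implies the other.
\<close>

text \<open>Words under concatenation form a monoid, which makes 'g fa the monoid algebra.\<close>

instantiation list :: (type) monoid_add
begin
definition zero_list_def: "0 = []"
definition plus_list_def: "xs + ys = xs @ ys"
instance by standard (auto simp: zero_list_def plus_list_def)
end

abbreviation fa_const :: "complex \<Rightarrow> 'g fa" where
  "fa_const c \<equiv> Poly_Mapping.single [] c"

lemma fa_sum_single_lookup:
  "(\<Sum>v\<in>Poly_Mapping.keys x. Poly_Mapping.single v (Poly_Mapping.lookup x v)) = (x :: 'g fa)"
  (is "?s = x")
proof (rule poly_mapping_eqI)
  fix w
  have "Poly_Mapping.lookup ?s w
      = (\<Sum>v\<in>Poly_Mapping.keys x. if v = w then Poly_Mapping.lookup x v else 0)"
    unfolding lookup_sum by (intro sum.cong) (auto simp: lookup_single)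
  also have "\<dots> = Poly_Mapping.lookup x w"
    by (auto simp: in_keys_iff)
  finally show "Poly_Mapping.lookup ?s w = Poly_Mapping.lookup x w" .
qed

lemma fa_mult_eq_times: "fa_mult f h = f * h"
proof -
  have "f * h = (\<Sum>v\<in>Poly_Mapping.keys f. Poly_Mapping.single v (Poly_Mapping.lookup f v)) *
     (\<Sum>w\<in>Poly_Mapping.keys h. Poly_Mapping.single w (Poly_Mapping.lookup h w))"
    by (simp only: fa_sum_single_lookup)
  also have "\<dots> = fa_mult f h"
    unfolding fa_mult_def sum_distrib_left sum_distrib_right
    by (subst sum.swap) (simp add: mult_single plus_list_def)
  finally show ?thesis by simp
qed

lemma fa_one_eq_1: "fa_one = 1"
  by (simp add: fa_one_def zero_list_def[symmetric] one_poly_mapping.abs_eq)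

lemma fa_smult_eq: "fa_smult c f = fa_const c * f"
  by (simp add: fa_smult_def fa_mult_eq_times)

lemma fa_comm_eq: "fa_comm x y = x * y - y * x"
  by (simp add: fa_comm_def fa_mult_eq_times)

lemma fa_const_mult [simp]: "fa_const c * fa_const d = fa_const (c * d)"
  by (simp add: mult_single plus_list_def)

lemma fa_const_add: "fa_const (c + d) = fa_const c + fa_const d"
  by (simp add: single_add)

lemma fa_const_1 [simp]: "fa_const 1 = 1"
  by (metis fa_one_def fa_one_eq_1)

lemma fa_const_commute: "(x :: 'g fa) * fa_const c = fa_const c * x"
proof -
  let ?s = "\<Sum>v\<in>Poly_Mapping.keys x. Poly_Mapping.single v (Poly_Mapping.lookup x v)"
  have "?s * fa_const c = fa_const c * ?s"
    by (simp add: sum_distrib_left sum_distrib_right mult_single plus_list_def mult.commute)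
  then show ?thesis
    by (simp only: fa_sum_single_lookup)
qed

lemma fa_const_left_commute: "(x :: 'g fa) * (fa_const c * y) = fa_const c * (x * y)"
  by (metis mult.assoc fa_const_commute)

lemma fa_word_append: "fa_word \<phi> (v @ w) = fa_word \<phi> v * fa_word \<phi> w"
  by (induction v) (auto simp: fa_mult_eq_times fa_one_eq_1 mult.assoc)

lemma fa_subst_eq:
  "fa_subst \<phi> f = (\<Sum>v\<in>Poly_Mapping.keys f. fa_const (Poly_Mapping.lookup f v) * fa_word \<phi> v)"
  by (simp add: fa_subst_def fa_smult_eq)

lemma fa_subst_eq_sum:
  assumes "finite S" "Poly_Mapping.keys f \<subseteq> S"
  shows "fa_subst \<phi> f = (\<Sum>v\<in>S. fa_const (Poly_Mapping.lookup f v) * fa_word \<phi> v)"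
  unfolding fa_subst_def fa_smult_eq
  by (rule sum.mono_neutral_left) (use assms in \<open>auto simp: in_keys_iff\<close>)

lemma fa_subst_add: "fa_subst \<phi> (x + y) = fa_subst \<phi> x + fa_subst \<phi> y"
proof -
  let ?S = "Poly_Mapping.keys x \<union> Poly_Mapping.keys y"
  have "fa_subst \<phi> (x + y) = (\<Sum>v\<in>?S. fa_const (Poly_Mapping.lookup (x + y) v) * fa_word \<phi> v)"
    by (rule fa_subst_eq_sum) (auto simp: keys_add)
  also have "\<dots> = (\<Sum>v\<in>?S. fa_const (Poly_Mapping.lookup x v) * fa_word \<phi> v)
      + (\<Sum>v\<in>?S. fa_const (Poly_Mapping.lookup y v) * fa_word \<phi> v)"
    by (simp add: lookup_add fa_const_add distrib_right sum.distrib)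
  also have "\<dots> = fa_subst \<phi> x + fa_subst \<phi> y"
    by (subst (1 2) fa_subst_eq_sum[where S = ?S]) auto
  finally show ?thesis .
qed

lemma fa_subst_0 [simp]: "fa_subst \<phi> 0 = 0"
  by (simp add: fa_subst_def)

lemma fa_subst_sum: "fa_subst \<phi> (sum f A) = (\<Sum>a\<in>A. fa_subst \<phi> (f a))"
  by (induction A rule: infinite_finite_induct) (auto simp: fa_subst_add)

lemma fa_subst_single: "fa_subst \<phi> (Poly_Mapping.single v c) = fa_const c * fa_word \<phi> v"
  by (subst fa_subst_eq_sum[where S = "{v}"]) (auto simp: lookup_single)

lemma fa_subst_mult: "fa_subst \<phi> (x * y) = fa_subst \<phi> x * fa_subst \<phi> y"
proof -
  have "x * y = (\<Sum>v\<in>Poly_Mapping.keys x. \<Sum>w\<in>Poly_Mapping.keys y.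
        Poly_Mapping.single (v @ w) (Poly_Mapping.lookup x v * Poly_Mapping.lookup y w))"
    by (simp only: fa_mult_def flip: fa_mult_eq_times)
  then have "fa_subst \<phi> (x * y) = (\<Sum>v\<in>Poly_Mapping.keys x. \<Sum>w\<in>Poly_Mapping.keys y.
        fa_const (Poly_Mapping.lookup x v * Poly_Mapping.lookup y w) * (fa_word \<phi> v * fa_word \<phi> w))"
    by (simp add: fa_subst_sum fa_subst_single fa_word_append)
  also have "\<dots> = fa_subst \<phi> x * fa_subst \<phi> y"
    unfolding fa_subst_def fa_smult_eq sum_product
    by (intro sum.cong refl) (metis mult.assoc fa_const_left_commute fa_const_mult)
  finally show ?thesis .
qed

lemma fa_subst_const [simp]: "fa_subst \<phi> (fa_const c) = fa_const c"
  by (simp add: fa_subst_single fa_one_eq_1)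

lemma fa_subst_1 [simp]: "fa_subst \<phi> 1 = 1"
  using fa_subst_const[of \<phi> 1] by simp

lemma fa_subst_gen [simp]: "fa_subst \<phi> (fa_gen g) = \<phi> g"
  by (simp add: fa_gen_def fa_subst_single fa_mult_eq_times fa_one_eq_1)

lemma fa_subst_diff: "fa_subst \<phi> (x - y) = fa_subst \<phi> x - fa_subst \<phi> y"
  using fa_subst_add[of \<phi> "x - y" y] by (simp add: eq_diff_eq)

lemma fa_subst_fa_subst: "fa_subst \<psi> (fa_subst \<phi> x) = fa_subst (\<lambda>g. fa_subst \<psi> (\<phi> g)) x"
proof -
  have "fa_subst \<psi> (fa_word \<phi> v) = fa_word (\<lambda>g. fa_subst \<psi> (\<phi> g)) v" for v
    by (induction v) (auto simp: fa_subst_mult fa_mult_eq_times fa_one_eq_1)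
  then show ?thesis
    by (simp add: fa_subst_eq[of \<phi>] fa_subst_eq[of "\<lambda>g. fa_subst \<psi> (\<phi> g)"] fa_subst_sum
        fa_subst_mult)
qed

lemma fa_subst_cong:
  assumes "fa_on G x" "\<And>g. g \<in> G \<Longrightarrow> \<phi> g = \<psi> g"
  shows "fa_subst \<phi> x = fa_subst \<psi> x"
proof -
  have "fa_word \<phi> v = fa_word \<psi> v" if "set v \<subseteq> G" for v
    using that assms(2) by (induction v) auto
  then show ?thesis
    using assms(1) unfolding fa_subst_def fa_on_def by (intro sum.cong refl) auto
qed

lemma fa_subst_fa_gen: "fa_subst fa_gen x = x"
proof -
  have word: "fa_word fa_gen v = Poly_Mapping.single v 1" for v
    by (induction v) (auto simp: fa_one_def fa_gen_def fa_mult_eq_times mult_single plus_list_def)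
  have "fa_subst fa_gen x
      = (\<Sum>v\<in>Poly_Mapping.keys x. fa_const (Poly_Mapping.lookup x v) * Poly_Mapping.single v 1)"
    by (simp add: fa_subst_eq word)
  also have "\<dots> = x"
    by (subst (2) fa_sum_single_lookup[symmetric]) (simp add: mult_single plus_list_def)
  finally show ?thesis .
qed

lemma fa_subst_eq_self:
  "fa_on G x \<Longrightarrow> (\<And>g. g \<in> G \<Longrightarrow> \<phi> g = fa_gen g) \<Longrightarrow> fa_subst \<phi> x = x"
  using fa_subst_cong[of G x \<phi> fa_gen] fa_subst_fa_gen by metis

lemma fa_on_0 [simp]: "fa_on G 0"
  by (simp add: fa_on_def)

lemma fa_on_const [simp]: "fa_on G (fa_const c)"
  by (simp add: fa_on_def)

lemma fa_on_1 [simp]: "fa_on G 1"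
  using fa_on_const[of G 1] by simp

lemma fa_on_add: "fa_on G x \<Longrightarrow> fa_on G y \<Longrightarrow> fa_on G (x + y)"
  unfolding fa_on_def using keys_add[of x y] by blast

lemma fa_on_mult: "fa_on G x \<Longrightarrow> fa_on G y \<Longrightarrow> fa_on G (x * y)"
  unfolding fa_on_def using keys_mult[of x y] by (fastforce simp: plus_list_def)

lemma fa_on_diff: "fa_on G x \<Longrightarrow> fa_on G y \<Longrightarrow> fa_on G (x - y)"
  unfolding fa_on_def using keys_add[of x "- y"] by auto

lemma fa_on_sum: "(\<And>a. a \<in> A \<Longrightarrow> fa_on G (f a)) \<Longrightarrow> fa_on G (sum f A)"
  by (induction A rule: infinite_finite_induct) (auto intro: fa_on_add)

lemma fa_on_gen: "g \<in> G \<Longrightarrow> fa_on G (fa_gen g)"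
  by (simp add: fa_on_def fa_gen_def)

lemma fa_on_subst:
  assumes "\<forall>g\<in>G. fa_on G' (\<phi> g)" "fa_on G x"
  shows "fa_on G' (fa_subst \<phi> x)"
proof -
  have "fa_on G' (fa_word \<phi> v)" if "set v \<subseteq> G" for v
    using that assms(1) by (induction v) (auto simp: fa_mult_eq_times fa_one_eq_1 intro: fa_on_mult)
  then show ?thesis
    using assms(2) unfolding fa_subst_def fa_smult_eq fa_on_def[of G]
    by (intro fa_on_sum fa_on_mult fa_on_const) auto
qed

lemma fa_ideal_mult_left: "fa_on G c \<Longrightarrow> x \<in> fa_ideal G R \<Longrightarrow> c * x \<in> fa_ideal G R"
  using fa_ideal.lmul[of G c x R] by (simp add: fa_mult_eq_times)

lemma fa_ideal_mult_right: "fa_on G c \<Longrightarrow> x \<in> fa_ideal G R \<Longrightarrow> x * c \<in> fa_ideal G R"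
  using fa_ideal.rmul[of G c x R] by (simp add: fa_mult_eq_times)

lemma fa_ideal_const_mult: "x \<in> fa_ideal G R \<Longrightarrow> fa_const c * x \<in> fa_ideal G R"
  by (simp add: fa_ideal_mult_left)

lemma fa_ideal_sum: "(\<And>a. a \<in> A \<Longrightarrow> f a \<in> fa_ideal G R) \<Longrightarrow> sum f A \<in> fa_ideal G R"
  by (induction A rule: infinite_finite_induct) (auto intro: fa_ideal.intros)

lemma fa_subst_fa_ideal:
  assumes "\<forall>g\<in>G. fa_on G' (\<phi> g)" "\<forall>r\<in>R. fa_subst \<phi> r \<in> fa_ideal G' R'"
    and "x \<in> fa_ideal G R"
  shows "fa_subst \<phi> x \<in> fa_ideal G' R'"
  using assms(3)
proof induction
  case (lmul c x)
  then show ?case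
    using assms(1) by (auto simp: fa_mult_eq_times fa_subst_mult intro: fa_ideal_mult_left fa_on_subst)
next
  case (rmul c x)
  then show ?case
    using assms(1) by (auto simp: fa_mult_eq_times fa_subst_mult intro: fa_ideal_mult_right fa_on_subst)
qed (use assms(2) in \<open>auto simp: fa_subst_add intro: fa_ideal.intros\<close>)

lemma induces_isoI:
  assumes \<phi>_on: "\<forall>g\<in>G1. fa_on G2 (\<phi> g)" and \<psi>_on: "\<forall>g\<in>G2. fa_on G1 (\<psi> g)"
    and \<psi>_\<phi>: "\<And>g. g \<in> G1 \<Longrightarrow> fa_subst \<psi> (\<phi> g) = fa_gen g"
    and \<phi>_\<psi>: "\<And>g. g \<in> G2 \<Longrightarrow> fa_subst \<phi> (\<psi> g) = fa_gen g"
    and \<phi>_rels: "\<forall>r\<in>R1. fa_subst \<phi> r \<in> fa_ideal G2 R2"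
    and \<psi>_rels: "\<forall>r\<in>R2. fa_subst \<psi> r \<in> fa_ideal G1 R1"
  shows "induces_iso G1 R1 G2 R2 \<phi>"
  unfolding induces_iso_def
proof (intro conjI allI impI \<phi>_on)
  fix x
  assume x: "fa_on G1 x"
  then have \<psi>\<phi>x: "fa_subst \<psi> (fa_subst \<phi> x) = x"
    unfolding fa_subst_fa_subst by (rule fa_subst_eq_self) (rule \<psi>_\<phi>)
  show "fa_subst \<phi> x \<in> fa_ideal G2 R2 \<longleftrightarrow> x \<in> fa_ideal G1 R1"
    using fa_subst_fa_ideal[OF \<psi>_on \<psi>_rels, of "fa_subst \<phi> x"]
      fa_subst_fa_ideal[OF \<phi>_on \<phi>_rels, of x] \<psi>\<phi>x by auto
next
  fix y
  assume y: "fa_on G2 y"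
  then have "fa_subst \<phi> (fa_subst \<psi> y) = y"
    unfolding fa_subst_fa_subst by (rule fa_subst_eq_self) (rule \<phi>_\<psi>)
  then show "\<exists>x. fa_on G1 x \<and> fa_subst \<phi> x - y \<in> fa_ideal G2 R2"
    using fa_on_subst[OF \<psi>_on y] fa_ideal.zero[of G2 R2] by auto
qed

lemma pseq_monic: "degree (pseq a b m) = m \<and> coeff (pseq a b m) m = 1"
proof (induction a b m rule: pseq.induct)
  case (3 a b m)
  let ?q = "[:- a (Suc m), 1:] * pseq a b (Suc m)"
  let ?r = "smult (b (Suc m)) (pseq a b m)"
  have "pseq a b (Suc m) \<noteq> 0"
    using 3(1) by auto
  then have deg_q: "degree ?q = Suc (Suc m)"
    using 3(1) by (subst degree_mult_eq) auto
  have "coeff ?q (Suc (Suc m)) = 1"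
    using 3(1) coeff_mult_degree_sum[of "[:- a (Suc m), 1:]" "pseq a b (Suc m)"] by simp
  moreover have "degree ?r < degree ?q"
    using deg_q 3(2) by (simp add: degree_smult_le le_less_trans)
  moreover have "coeff ?r (Suc (Suc m)) = 0"
    using 3(2) by (simp add: coeff_eq_0)
  ultimately show ?case
    using deg_q degree_add_eq_left[of "- ?r" ?q] by simp
qed auto

lemma pseq_degree [simp]: "degree (pseq a b m) = m"
  using pseq_monic by blast

lemma pseq_lead_coeff [simp]: "coeff (pseq a b m) m = 1"
  using pseq_monic by blast

lemma pseq_shift:
  "[:0, 1:] * pseq a b r = pseq a b (Suc r) + smult (a r) (pseq a b r)
     + smult (b r) (if r = 0 then 0 else pseq a b (r - 1))"
proof (cases r)
  case (Suc m)
  have "[:0, 1:] * pseq a b r = ([:- a r, 1:] + [:a r:]) * pseq a b r"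
    by simp
  then show ?thesis
    using Suc by (simp only: distrib_right) simp
qed simp

lemma monic_seq_span:
  fixes B :: "nat \<Rightarrow> 'a::comm_ring_1 poly"
  assumes deg: "\<And>m. degree (B m) = m" and lead: "\<And>m. coeff (B m) m = 1"
    and "degree p \<le> N"
  shows "\<exists>c. p = (\<Sum>m\<le>N. smult (c m) (B m))"
  using \<open>degree p \<le> N\<close>
proof (induction N arbitrary: p)
  case 0
  have "B 0 = 1"
    using degree_0_id[OF deg[of 0]] lead[of 0] by (simp add: one_pCons)
  moreover have "p = [:coeff p 0:]"
    using 0 degree_0_id[of p] by simp
  ultimately have "p = (\<Sum>m\<le>0. smult (coeff p 0) (B m))"
    by simp
  then show ?case
    by (intro exI[of _ "\<lambda>_. coeff p 0"])
next
  case (Suc N)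
  let ?p' = "p - smult (coeff p (Suc N)) (B (Suc N))"
  have "degree ?p' \<le> Suc N"
    using Suc.prems degree_smult_le[of "coeff p (Suc N)" "B (Suc N)"] deg[of "Suc N"]
    by (intro degree_diff_le) simp_all
  moreover have "coeff ?p' (Suc N) = 0"
    using lead by simp
  moreover have "degree ?p' \<noteq> Suc N"
    by (metis \<open>coeff ?p' (Suc N) = 0\<close> leading_coeff_0_iff nat.distinct(1) degree_0)
  ultimately have "degree ?p' \<le> N"
    by linarith
  then obtain c where c: "?p' = (\<Sum>m\<le>N. smult (c m) (B m))"
    using Suc.IH by blast
  let ?c = "c(Suc N := coeff p (Suc N))"
  have "p = (\<Sum>m\<le>N. smult (c m) (B m)) + smult (coeff p (Suc N)) (B (Suc N))"
    unfolding c[symmetric] by simp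
  also have "(\<Sum>m\<le>N. smult (c m) (B m)) = (\<Sum>m\<le>N. smult (?c m) (B m))"
    by (intro sum.cong) auto
  finally have "p = (\<Sum>m\<le>Suc N. smult (?c m) (B m))"
    by (simp add: sum.atMost_Suc)
  then show ?case
    by (intro exI[of _ ?c])
qed

lemma pseq_span: "\<exists>N c. p = (\<Sum>m\<le>N. smult (c m) (pseq a b m))"
  using monic_seq_span[of "pseq a b" p "degree p"] by auto

lemma monom_span: "\<exists>N c. (p :: 'a::comm_ring_1 poly) = (\<Sum>m\<le>N. smult (c m) (monom 1 m))"
  using poly_as_sum_of_monoms[of p]
  by (intro exI[of _ "degree p"] exI[of _ "coeff p"]) (simp add: smult_monom)

lemma z0_coeff_eq: "z0_coeff p T = (\<Sum>k\<le>degree p. fa_const (coeff p k) * T k)"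
  by (simp add: z0_coeff_def fa_smult_eq)

lemma z0_coeff_eq_sum_upto:
  "degree p \<le> N \<Longrightarrow> z0_coeff p T = (\<Sum>k\<le>N. fa_const (coeff p k) * T k)"
  unfolding z0_coeff_eq by (rule sum.mono_neutral_left) (auto simp: coeff_eq_0)

lemma z0_coeff_0 [simp]: "z0_coeff 0 T = 0"
  by (simp add: z0_coeff_eq)

lemma z0_coeff_add: "z0_coeff (p + q) T = z0_coeff p T + z0_coeff q T"
proof -
  let ?N = "max (degree p) (degree q)"
  have "degree (p + q) \<le> ?N"
    by (rule degree_add_le) auto
  then show ?thesis
    by (simp add: z0_coeff_eq_sum_upto[where N = ?N] fa_const_add distrib_right sum.distrib)
qed

lemma z0_coeff_smult: "z0_coeff (smult c p) T = fa_const c * z0_coeff p T"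
  by (simp add: z0_coeff_eq_sum_upto[where N = "degree p"] degree_smult_le sum_distrib_left
      mult.assoc flip: fa_const_mult)

lemma z0_coeff_monom: "z0_coeff (monom 1 r) T = T r"
  by (simp add: z0_coeff_eq_sum_upto[where N = r] degree_monom_le coeff_monom if_distrib
      if_distribR cong: if_cong)

lemma z0_coeff_monic:
  "degree p = r \<Longrightarrow> coeff p r = 1 \<Longrightarrow> z0_coeff p T = T r + (\<Sum>k<r. fa_const (coeff p k) * T k)"
  by (simp add: z0_coeff_eq lessThan_Suc_atMost[symmetric] add.commute)

lemma fa_subst_z0_coeff: "fa_subst \<phi> (z0_coeff p T) = z0_coeff p (\<lambda>k. fa_subst \<phi> (T k))"
  by (simp add: z0_coeff_eq fa_subst_sum fa_subst_mult)

lemma fa_on_z0_coeff: "(\<And>k. fa_on G (T k)) \<Longrightarrow> fa_on G (z0_coeff p T)"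
  unfolding z0_coeff_eq by (intro fa_on_sum fa_on_mult fa_on_const)

fun triangular_solve :: "(nat \<Rightarrow> complex poly) \<Rightarrow> (nat \<Rightarrow> 'g fa) \<Rightarrow> nat \<Rightarrow> 'g fa" where
  "triangular_solve B T r = T r - (\<Sum>l<r. fa_const (coeff (B r) l) * triangular_solve B T l)"

declare triangular_solve.simps [simp del]

lemma z0_coeff_triangular_solve:
  "degree (B r) = r \<Longrightarrow> coeff (B r) r = 1 \<Longrightarrow> z0_coeff (B r) (triangular_solve B T) = T r"
  by (simp add: z0_coeff_monic triangular_solve.simps[of B T r])

lemma triangular_solve_z0_coeff:
  assumes "\<And>m. degree (B m) = m" "\<And>m. coeff (B m) m = 1"
  shows "triangular_solve B (\<lambda>m. z0_coeff (B m) S) r = S r"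
proof (induction r rule: less_induct)
  case (less r)
  then have "triangular_solve B (\<lambda>m. z0_coeff (B m) S) r
      = z0_coeff (B r) S - (\<Sum>l<r. fa_const (coeff (B r) l) * S l)"
    by (simp add: triangular_solve.simps[of B _ r])
  also have "\<dots> = S r"
    by (simp add: z0_coeff_monic assms)
  finally show ?case .
qed

lemma fa_subst_triangular_solve:
  "fa_subst \<phi> (triangular_solve B T r) = triangular_solve B (\<lambda>m. fa_subst \<phi> (T m)) r"
proof (induction r rule: less_induct)
  case (less r)
  then show ?case
    by (subst (1 2) triangular_solve.simps) (simp add: fa_subst_diff fa_subst_sum fa_subst_mult)
qed

lemma fa_on_triangular_solve:
  assumes "\<And>m. fa_on G (T m)"
  shows "fa_on G (triangular_solve B T r)"
proof (induction r rule: less_induct)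
  case (less r)
  show ?case
    by (subst triangular_solve.simps)
      (intro fa_on_diff fa_on_sum fa_on_mult fa_on_const assms; simp add: less)
qed

abbreviation poly_entry ::
    "(nat \<Rightarrow> nat \<Rightarrow> nat \<Rightarrow> 'g fa) \<Rightarrow> nat \<Rightarrow> nat \<Rightarrow> complex poly \<Rightarrow> 'g fa" where
  "poly_entry T i j p \<equiv> z0_coeff p (\<lambda>r. T r i j)"

definition rtt_rel :: "(nat \<Rightarrow> nat \<Rightarrow> nat \<Rightarrow> 'g fa) \<Rightarrow> nat \<Rightarrow> nat \<Rightarrow> nat \<Rightarrow> nat
    \<Rightarrow> complex poly \<Rightarrow> complex poly \<Rightarrow> 'g fa" where
  "rtt_rel T i j k l p q =
     (poly_entry T i j ([:0, 1:] * p) * poly_entry T k l q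
        - poly_entry T k l q * poly_entry T i j ([:0, 1:] * p))
   - (poly_entry T i j p * poly_entry T k l ([:0, 1:] * q)
        - poly_entry T k l ([:0, 1:] * q) * poly_entry T i j p)
   - (poly_entry T k j p * poly_entry T i l q - poly_entry T k j q * poly_entry T i l p)"

lemma rtt_rel_add_left:
  "rtt_rel T i j k l (p1 + p2) q = rtt_rel T i j k l p1 q + rtt_rel T i j k l p2 q"
  unfolding rtt_rel_def distrib_left[of "[:0, 1:]"] z0_coeff_add by (simp add: algebra_simps)

lemma rtt_rel_add_right:
  "rtt_rel T i j k l p (q1 + q2) = rtt_rel T i j k l p q1 + rtt_rel T i j k l p q2"
  unfolding rtt_rel_def distrib_left[of "[:0, 1:]"] z0_coeff_add by (simp add: algebra_simps)

lemma rtt_rel_smult_left: "rtt_rel T i j k l (smult c p) q = fa_const c * rtt_rel T i j k l p q"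
  unfolding rtt_rel_def mult_smult_right z0_coeff_smult
  by (simp add: right_diff_distrib mult.assoc fa_const_left_commute)

lemma rtt_rel_smult_right: "rtt_rel T i j k l p (smult c q) = fa_const c * rtt_rel T i j k l p q"
  unfolding rtt_rel_def mult_smult_right z0_coeff_smult
  by (simp add: right_diff_distrib mult.assoc fa_const_left_commute)

lemma fa_ideal_linear_comb:
  assumes add: "\<And>p q. f (p + q) = f p + f q"
    and smult: "\<And>c p. f (smult c p) = fa_const c * f p"
    and basis: "\<And>m. f (B m) \<in> fa_ideal G R"
  shows "f (\<Sum>m\<in>A. smult (c m) (B m)) \<in> fa_ideal G R"
proof -
  have "f 0 = 0"
    using add[of 0 0] by simp
  then have "f (\<Sum>m\<in>A. smult (c m) (B m)) = (\<Sum>m\<in>A. fa_const (c m) * f (B m))"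
    by (induction A rule: infinite_finite_induct) (auto simp: add smult)
  then show ?thesis
    using basis by (auto intro!: fa_ideal_sum fa_ideal_const_mult)
qed

lemma rtt_rel_in_fa_ideal:
  assumes span: "\<And>p. \<exists>N c. p = (\<Sum>m\<le>N. smult (c m) (B m))"
    and basis: "\<And>r s. rtt_rel T i j k l (B r) (B s) \<in> fa_ideal G R"
  shows "rtt_rel T i j k l p q \<in> fa_ideal G R"
proof -
  obtain N c where p: "p = (\<Sum>m\<le>N. smult (c m) (B m))"
    using span by blast
  obtain M d where q: "q = (\<Sum>m\<le>M. smult (d m) (B m))"
    using span by blast
  have basis_left: "rtt_rel T i j k l (B r) q \<in> fa_ideal G R" for r
    unfolding q
    by (rule fa_ideal_linear_comb) (auto simp: rtt_rel_add_right rtt_rel_smult_right basis)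
  show ?thesis
    unfolding p by (rule fa_ideal_linear_comb[where f = "\<lambda>p. rtt_rel T i j k l p q"])
      (auto simp: rtt_rel_add_left rtt_rel_smult_left basis_left)
qed

lemma fa_subst_rtt_rel:
  "fa_subst \<phi> (rtt_rel T i j k l p q) = rtt_rel (\<lambda>r i j. fa_subst \<phi> (T r i j)) i j k l p q"
  by (simp add: rtt_rel_def fa_subst_diff fa_subst_mult fa_subst_z0_coeff)

lemma yangian_rels_eq:
  "yangian_rels n = {rtt_rel tY i j k l (monom 1 r) (monom 1 s) | r s i j k l.
      i \<in> {1..n} \<and> j \<in> {1..n} \<and> k \<in> {1..n} \<and> l \<in> {1..n}}"
proof -
  have "[:0, 1:] * monom 1 r = monom (1 :: complex) (Suc r)" for r
    by (simp add: monom_Suc)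
  then show ?thesis
    by (simp add: yangian_rels_def rtt_rel_def z0_coeff_monom fa_comm_eq fa_mult_eq_times)
qed

lemma rtt_rel_tY_mem_ideal:
  assumes "i \<in> {1..n}" "j \<in> {1..n}" "k \<in> {1..n}" "l \<in> {1..n}"
  shows "rtt_rel tY i j k l p q \<in> fa_ideal (gens n) (yangian_rels n)"
  by (rule rtt_rel_in_fa_ideal[OF monom_span], rule fa_ideal.base)
    (use assms in \<open>unfold yangian_rels_eq, blast\<close>)

definition tY_in_oy :: "(nat \<Rightarrow> complex) \<Rightarrow> (nat \<Rightarrow> complex) \<Rightarrow> nat \<Rightarrow> nat \<Rightarrow> nat
    \<Rightarrow> (nat \<times> nat \<times> nat) fa" where
  "tY_in_oy a b r i j = triangular_solve (pseq a b) (\<lambda>m. tO m i j) r"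

lemma poly_entry_tY_in_oy_pseq: "poly_entry (tY_in_oy a b) i j (pseq a b r) = tO r i j"
  unfolding tY_in_oy_def by (rule z0_coeff_triangular_solve) simp_all

lemma poly_entry_tY_in_oy_shift:
  "poly_entry (tY_in_oy a b) i j ([:0, 1:] * pseq a b r) = tO_shift a b r i j"
  unfolding pseq_shift z0_coeff_add z0_coeff_smult
  by (simp add: poly_entry_tY_in_oy_pseq tO_shift_def tO_prev_def fa_smult_eq)

lemma oy_rels_eq:
  "oy_rels n a b = {rtt_rel (tY_in_oy a b) i j k l (pseq a b r) (pseq a b s) | r s i j k l.
      i \<in> {1..n} \<and> j \<in> {1..n} \<and> k \<in> {1..n} \<and> l \<in> {1..n}}"
  unfolding rtt_rel_def poly_entry_tY_in_oy_pseq poly_entry_tY_in_oy_shift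
  by (simp add: oy_rels_def fa_comm_eq fa_mult_eq_times)

lemma rtt_rel_tY_in_oy_mem_ideal:
  assumes "i \<in> {1..n}" "j \<in> {1..n}" "k \<in> {1..n}" "l \<in> {1..n}"
  shows "rtt_rel (tY_in_oy a b) i j k l p q \<in> fa_ideal (gens n) (oy_rels n a b)"
  by (rule rtt_rel_in_fa_ideal[OF pseq_span], rule fa_ideal.base)
    (use assms in \<open>unfold oy_rels_eq, blast\<close>)

definition Wmap_inv :: "(nat \<Rightarrow> complex) \<Rightarrow> (nat \<Rightarrow> complex) \<Rightarrow> nat \<times> nat \<times> nat
    \<Rightarrow> (nat \<times> nat \<times> nat) fa" where
  "Wmap_inv a b g = (case g of (i, j, r) \<Rightarrow> tY_in_oy a b r i j)"

lemma Wmap_eq: "Wmap a b (i, j, r) = poly_entry tY i j (pseq a b r)"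
  by (simp add: Wmap_def z0_coeff_monic fa_smult_eq)

lemma fa_subst_tY:
  assumes "\<And>r. 1 \<le> r \<Longrightarrow> \<phi> (i, j, r) = T r" "T 0 = tY 0 i j"
  shows "fa_subst \<phi> (tY r i j) = T r"
  using assms by (cases "r = 0") (auto simp: tY_def fa_one_eq_1)

lemma fa_subst_Wmap_tY: "fa_subst (Wmap a b) (tY r i j) = poly_entry tY i j (pseq a b r)"
  by (rule fa_subst_tY) (simp_all add: Wmap_eq z0_coeff_monic)

lemma fa_subst_Wmap_inv_tY: "fa_subst (Wmap_inv a b) (tY r i j) = tY_in_oy a b r i j"
  by (rule fa_subst_tY) (simp_all add: Wmap_inv_def tY_in_oy_def triangular_solve.simps[of _ _ 0])

lemma fa_subst_Wmap_tY_in_oy: "fa_subst (Wmap a b) (tY_in_oy a b r i j) = tY r i j"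
  unfolding tY_in_oy_def fa_subst_triangular_solve fa_subst_Wmap_tY
  by (rule triangular_solve_z0_coeff) simp_all

lemma fa_subst_Wmap_inv_Wmap: "fa_subst (Wmap_inv a b) (Wmap a b (i, j, r)) = tO r i j"
  by (simp add: Wmap_eq fa_subst_z0_coeff fa_subst_Wmap_inv_tY poly_entry_tY_in_oy_pseq)

lemma Wmap_induces_iso:
  "induces_iso (gens n) (oy_rels n a b) (gens n) (yangian_rels n) (Wmap a b)"
proof (rule induces_isoI[where \<psi> = "Wmap_inv a b"])
  have tY_on: "fa_on (gens n) (tY r i j)" if "(i, j, s) \<in> gens n" for i j r s
    using that by (auto simp: tY_def fa_one_eq_1 gens_def intro: fa_on_gen)
  show "\<forall>g\<in>gens n. fa_on (gens n) (Wmap a b g)"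
    by (auto simp: Wmap_eq intro!: fa_on_z0_coeff elim: tY_on)
  show "\<forall>g\<in>gens n. fa_on (gens n) (Wmap_inv a b g)"
    by (auto simp: Wmap_inv_def tY_in_oy_def intro!: fa_on_triangular_solve elim: tY_on)
  show "fa_subst (Wmap_inv a b) (Wmap a b g) = fa_gen g" if "g \<in> gens n" for g
    using that by (auto simp: fa_subst_Wmap_inv_Wmap tY_def gens_def)
  show "fa_subst (Wmap a b) (Wmap_inv a b g) = fa_gen g" if "g \<in> gens n" for g
    using that by (auto simp: Wmap_inv_def fa_subst_Wmap_tY_in_oy tY_def gens_def)
  show "\<forall>r\<in>oy_rels n a b. fa_subst (Wmap a b) r \<in> fa_ideal (gens n) (yangian_rels n)"
    by (auto simp: oy_rels_eq fa_subst_rtt_rel fa_subst_Wmap_tY_in_oy rtt_rel_tY_mem_ideal)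
  show "\<forall>r\<in>yangian_rels n. fa_subst (Wmap_inv a b) r \<in> fa_ideal (gens n) (oy_rels n a b)"
    by (auto simp: yangian_rels_eq fa_subst_rtt_rel fa_subst_Wmap_inv_tY rtt_rel_tY_in_oy_mem_ideal)
qed

theorem mainTheorem1:
  fixes n :: nat and a b :: "nat \<Rightarrow> complex"
  assumes "n \<ge> 1"
    and "b 0 = 0"
    and "\<forall>m\<ge>1. b m \<noteq> 0"
  shows "induces_iso (gens n) (oy_rels n a b) (gens n) (yangian_rels n) (Wmap a b)
    \<and> (\<forall>i\<in>{1..n}. \<forall>j\<in>{1..n}. \<forall>l.
         fa_subst (Wmap a b) (tO l i j) = z0_coeff (pseq a b l) (\<lambda>r. tY r i j)
       \<and> z0_coeff (pseq a b l) (\<lambda>r. tY r i j)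
           = (\<Sum>m\<le>l. fa_smult (coeff (pseq a b l) m) (tY m i j)))"
  by (simp add: Wmap_induces_iso fa_subst_Wmap_tY z0_coeff_def)

end
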